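(* Let $\mathcal X$ be a coherent configuration on $\Omega$, let $\Pi$ be a generalized base of $\mathcal X$ and let $\alpha\in\Omega$. Put $\Omega'=\Omega\setminus\{\alpha\}$, let $\mathcal X'$ be the restriction of $\mathcal X_\alpha$ to $\Omega'$, and let $\Pi'=\{\Gamma\setminus\{\alpha\}:\Gamma\in\Pi\}$. Then $\Pi'$ is a generalized base of $\mathcal X'$.
   Context: A coherent configuration on a finite set $\Omega$ is a pair $\mathcal X=(\Omega,S)$ where $S$ is a partition of $\Omega\times\Omega$ such that $1_\Omega$ is a union of elements of $S$, $s^*=\{(\beta,\alpha):(\alpha,\beta)\in s\}\in S$ for $s\in S$, and for $r,s,t\in S$ the number $|\{\gamma:(\alpha,\gamma)\in r,(\gamma,\beta)\in s\}|$ is independent of $(\alpha,\beta)\in t$. Relations are unions of elements of $S$; fibers are sets $\Gamma$ with $1_\Gamma\in S$. A fission of $\mathcal X$ is a coherent configuration on $\Omega$ all of whose relations include those of $\mathcal X$. $\mathcal X$ is complete if every element of $S$ is a singleton. For $\Pi\subseteq 2^\Omega$, the $\Pi$-fission of $\mathcal X$ is the smallest fission in which every element of $\Pi$ is a union of fibers; $\Pi$ is a generalized base if its $\Pi$-fission is complete. $\mathcal X_\alpha$ denotes the $\{\{\alpha\}\}$-fission of $\mathcal X$ (so $\{\alpha\}$ and hence $\Omega\setminus\{\alpha\}$ are unions of fibers). For a union $\Gamma$ of fibers, the restriction $\mathcal X_\Gamma=(\Gamma,\{s\cap(\Gamma\times\Gamma):s\in S\}\setminus\{\emptyset\})$. 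*)

theory Defs
  imports Main
begin

text \<open>A coherent configuration is represented by its point set Omega and the
partition S of Omega x Omega into basis relations.\<close>

definition coherent_config :: "'a set \<Rightarrow> ('a \<times> 'a) set set \<Rightarrow> bool" where
  "coherent_config \<Omega> S \<longleftrightarrow>
     finite \<Omega> \<and>
     \<Union>S = \<Omega> \<times> \<Omega> \<and> {} \<notin> S \<and>
     (\<forall>s\<in>S. \<forall>t\<in>S. s \<noteq> t \<longrightarrow> s \<inter> t = {}) \<and>
     (\<exists>T\<subseteq>S. Id_on \<Omega> = \<Union>T) \<and>
     (\<forall>s\<in>S. converse s \<in> S) \<and>
     (\<forall>r\<in>S. \<forall>s\<in>S. \<forall>t\<in>S. \<forall>x\<in>t. \<forall>y\<in>t.
        card {c. (fst x, c) \<in> r \<and> (c, snd x) \<in> s} =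
        card {c. (fst y, c) \<in> r \<and> (c, snd y) \<in> s})"

definition is_relation :: "('a \<times> 'a) set set \<Rightarrow> ('a \<times> 'a) set \<Rightarrow> bool" where
  "is_relation S r \<longleftrightarrow> (\<exists>T\<subseteq>S. r = \<Union>T)"

definition is_fiber :: "('a \<times> 'a) set set \<Rightarrow> 'a set \<Rightarrow> bool" where
  "is_fiber S \<Gamma> \<longleftrightarrow> Id_on \<Gamma> \<in> S"

definition union_of_fibers :: "('a \<times> 'a) set set \<Rightarrow> 'a set \<Rightarrow> bool" where
  "union_of_fibers S \<Gamma> \<longleftrightarrow> (\<exists>F. (\<forall>\<Delta>\<in>F. is_fiber S \<Delta>) \<and> \<Gamma> = \<Union>F)"

definition is_fission :: "'a set \<Rightarrow> ('a \<times> 'a) set set \<Rightarrow> ('a \<times> 'a) set set \<Rightarrow> bool" where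
  "is_fission \<Omega> S S' \<longleftrightarrow> coherent_config \<Omega> S' \<and> (\<forall>r. is_relation S r \<longrightarrow> is_relation S' r)"

definition is_complete :: "('a \<times> 'a) set set \<Rightarrow> bool" where
  "is_complete S \<longleftrightarrow> (\<forall>s\<in>S. \<exists>p. s = {p})"

definition is_Pi_fission ::
  "'a set \<Rightarrow> ('a \<times> 'a) set set \<Rightarrow> 'a set set \<Rightarrow> ('a \<times> 'a) set set \<Rightarrow> bool" where
  "is_Pi_fission \<Omega> S \<Pi> S' \<longleftrightarrow>
     is_fission \<Omega> S S' \<and> (\<forall>\<Gamma>\<in>\<Pi>. union_of_fibers S' \<Gamma>) \<and>
     (\<forall>S''. is_fission \<Omega> S S'' \<and> (\<forall>\<Gamma>\<in>\<Pi>. union_of_fibers S'' \<Gamma>) \<longrightarrow> is_fission \<Omega> S' S'')"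

definition Pi_fission :: "'a set \<Rightarrow> ('a \<times> 'a) set set \<Rightarrow> 'a set set \<Rightarrow> ('a \<times> 'a) set set" where
  "Pi_fission \<Omega> S \<Pi> = (THE S'. is_Pi_fission \<Omega> S \<Pi> S')"

definition generalized_base :: "'a set \<Rightarrow> ('a \<times> 'a) set set \<Rightarrow> 'a set set \<Rightarrow> bool" where
  "generalized_base \<Omega> S \<Pi> \<longleftrightarrow> is_complete (Pi_fission \<Omega> S \<Pi>)"

definition point_ext :: "'a set \<Rightarrow> ('a \<times> 'a) set set \<Rightarrow> 'a \<Rightarrow> ('a \<times> 'a) set set" where
  "point_ext \<Omega> S \<alpha> = Pi_fission \<Omega> S {{\<alpha>}}"

definition restrict_cc :: "('a \<times> 'a) set set \<Rightarrow> 'a set \<Rightarrow> ('a \<times> 'a) set set" where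
  "restrict_cc S \<Gamma> = (\<lambda>s. s \<inter> (\<Gamma> \<times> \<Gamma>)) ` S - {{}}"

end

theory Submission
  imports Defs
begin

text \<open>Let $Y$ be a fission of $\mathcal X'$ in which every $\Gamma \setminus \{\alpha\}$ is a union of
  fibers. Adjoining $\alpha$ to $Y$ as a singleton fiber, together with the relations
  $\{\alpha\} \times \Delta$ and $\Delta \times \{\alpha\}$ for the fibers $\Delta$ of $Y$, yields a
  coherent configuration on $\Omega$. It is a fission of $\mathcal X_\alpha$, hence of $\mathcal X$:
  the fibers of $Y$ refine those of $\mathcal X_\alpha$, and a basis relation of $\mathcal X_\alpha$
  leaving the singleton fiber $\{\alpha\}$ contains all of $\{\alpha\} \times \Phi$ as soon as it meets
  it, for any fiber $\Phi$. Every $\Gamma \in \Pi$ is a union of its fibers, so it is a fission of the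
  complete $\Pi$-fission of $\mathcal X$; hence it is complete, and so is $Y$. Applied to the
  $\Pi'$-fission of $\mathcal X'$ this proves the claim.

  That $\Pi$-fissions exist at all is shown by taking the relations common to all admissible
  fissions: they are closed under the Boolean operations, converse and level sets of
  intersection numbers, so their atoms form a coherent configuration.\<close>

definition intersection_number :: "('a \<times> 'a) set \<Rightarrow> ('a \<times> 'a) set \<Rightarrow> 'a \<times> 'a \<Rightarrow> nat" where
  "intersection_number r s p = card {c. (fst p, c) \<in> r \<and> (c, snd p) \<in> s}"

lemma coherent_configD:
  assumes "coherent_config \<Omega> S"
  shows "finite \<Omega>" "\<Union>S = \<Omega> \<times> \<Omega>" "{} \<notin> S"
    "\<And>s t. s \<in> S \<Longrightarrow> t \<in> S \<Longrightarrow> s \<noteq> t \<Longrightarrow> s \<inter> t = {}"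
    "\<exists>T\<subseteq>S. Id_on \<Omega> = \<Union>T" "\<And>s. s \<in> S \<Longrightarrow> converse s \<in> S"
    "\<And>r s t p q. r \<in> S \<Longrightarrow> s \<in> S \<Longrightarrow> t \<in> S \<Longrightarrow> p \<in> t \<Longrightarrow> q \<in> t \<Longrightarrow>
       intersection_number r s p = intersection_number r s q"
  using assms unfolding coherent_config_def intersection_number_def Ball_def
  by simp_all

lemma basis_subset: "coherent_config \<Omega> S \<Longrightarrow> s \<in> S \<Longrightarrow> s \<subseteq> \<Omega> \<times> \<Omega>"
  using coherent_configD(2) by blast

lemma basis_eq: "coherent_config \<Omega> S \<Longrightarrow> s \<in> S \<Longrightarrow> t \<in> S \<Longrightarrow> p \<in> s \<Longrightarrow> p \<in> t \<Longrightarrow> s = t"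
  using coherent_configD(4) by blast

lemma basis_nonempty: "coherent_config \<Omega> S \<Longrightarrow> s \<in> S \<Longrightarrow> \<exists>p. p \<in> s"
  using coherent_configD(3) by (metis ex_in_conv)

lemma finite_basis: "coherent_config \<Omega> S \<Longrightarrow> finite S"
  by (rule finite_subset[of _ "Pow (\<Omega> \<times> \<Omega>)"]) (auto dest: basis_subset coherent_configD(1))

lemma is_relation_iff:
  assumes cc: "coherent_config \<Omega> S"
  shows "is_relation S r \<longleftrightarrow> r \<subseteq> \<Omega> \<times> \<Omega> \<and> (\<forall>z\<in>S. z \<inter> r \<noteq> {} \<longrightarrow> z \<subseteq> r)"
proof
  assume "is_relation S r"
  then obtain T where T: "T \<subseteq> S" "r = \<Union>T"
    unfolding is_relation_def by blast
  have "z \<subseteq> r" if z: "z \<in> S" "z \<inter> r \<noteq> {}" for z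
  proof -
    obtain t where t: "t \<in> T" "z \<inter> t \<noteq> {}"
      using z(2) T(2) by blast
    then have "z = t"
      using T(1) coherent_configD(4)[OF cc z(1)] by blast
    then show ?thesis using t(1) T(2) by blast
  qed
  moreover have "r \<subseteq> \<Omega> \<times> \<Omega>"
    using T coherent_configD(2)[OF cc] by blast
  ultimately show "r \<subseteq> \<Omega> \<times> \<Omega> \<and> (\<forall>z\<in>S. z \<inter> r \<noteq> {} \<longrightarrow> z \<subseteq> r)"
    by blast
next
  assume "r \<subseteq> \<Omega> \<times> \<Omega> \<and> (\<forall>z\<in>S. z \<inter> r \<noteq> {} \<longrightarrow> z \<subseteq> r)"
  then have sub: "r \<subseteq> \<Omega> \<times> \<Omega>" and sat: "\<And>z. z \<in> S \<Longrightarrow> z \<inter> r \<noteq> {} \<Longrightarrow> z \<subseteq> r"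
    by blast+
  have "r \<subseteq> \<Union>{z\<in>S. z \<subseteq> r}"
  proof
    fix p assume p: "p \<in> r"
    then have "p \<in> \<Union>S"
      using sub coherent_configD(2)[OF cc] by blast
    then obtain z where "z \<in> S" "p \<in> z" by blast
    with p sat show "p \<in> \<Union>{z\<in>S. z \<subseteq> r}" by blast
  qed
  then have "r = \<Union>{z\<in>S. z \<subseteq> r}" by blast
  then show "is_relation S r"
    unfolding is_relation_def by (intro exI[of _ "{z\<in>S. z \<subseteq> r}"]) simp
qed

lemma is_relationI:
  "coherent_config \<Omega> S \<Longrightarrow> r \<subseteq> \<Omega> \<times> \<Omega> \<Longrightarrow>
    (\<And>z. z \<in> S \<Longrightarrow> z \<inter> r \<noteq> {} \<Longrightarrow> z \<subseteq> r) \<Longrightarrow> is_relation S r"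
  by (simp add: is_relation_iff)

lemma is_relation_subset: "coherent_config \<Omega> S \<Longrightarrow> is_relation S r \<Longrightarrow> r \<subseteq> \<Omega> \<times> \<Omega>"
  by (simp add: is_relation_iff)

lemma is_relation_saturated:
  "coherent_config \<Omega> S \<Longrightarrow> is_relation S r \<Longrightarrow> z \<in> S \<Longrightarrow> p \<in> z \<Longrightarrow> p \<in> r \<Longrightarrow> z \<subseteq> r"
  by (auto simp: is_relation_iff)

lemma is_relation_basis: "s \<in> S \<Longrightarrow> is_relation S s"
  unfolding is_relation_def by (intro exI[of _ "{s}"]) auto

lemma is_relation_Union:
  assumes "\<forall>r\<in>R. is_relation S r"
  shows "is_relation S (\<Union>R)"
  unfolding is_relation_def
proof (intro exI conjI)
  show "{s\<in>S. \<exists>r\<in>R. s \<subseteq> r} \<subseteq> S" by blast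
  show "\<Union>R = \<Union>{s\<in>S. \<exists>r\<in>R. s \<subseteq> r}"
  proof
    show "\<Union>R \<subseteq> \<Union>{s\<in>S. \<exists>r\<in>R. s \<subseteq> r}"
    proof
      fix p assume "p \<in> \<Union>R"
      then obtain r where r: "r \<in> R" "p \<in> r" by blast
      have "is_relation S r" using assms r(1) by blast
      then obtain T where T: "T \<subseteq> S" "r = \<Union>T" unfolding is_relation_def by blast
      then obtain t where "t \<in> T" "p \<in> t" using r(2) by blast
      then have "t \<in> {s\<in>S. \<exists>r\<in>R. s \<subseteq> r}" using T r(1) by blast
      then show "p \<in> \<Union>{s\<in>S. \<exists>r\<in>R. s \<subseteq> r}" using \<open>p \<in> t\<close> by blast
    qed
    show "\<Union>{s\<in>S. \<exists>r\<in>R. s \<subseteq> r} \<subseteq> \<Union>R" by auto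
  qed
qed

lemma is_relation_Diff:
  assumes cc: "coherent_config \<Omega> S" and r: "is_relation S r" and r': "is_relation S r'"
  shows "is_relation S (r - r')"
proof (rule is_relationI[OF cc])
  show "r - r' \<subseteq> \<Omega> \<times> \<Omega>" using is_relation_subset[OF cc r] by blast
  fix z assume z: "z \<in> S" "z \<inter> (r - r') \<noteq> {}"
  then have "z \<subseteq> r"
    using is_relation_saturated[OF cc r] by blast
  moreover have "z \<inter> r' = {}"
    using z is_relation_saturated[OF cc r'] by blast
  ultimately show "z \<subseteq> r - r'" by blast
qed

lemma is_relation_Inter:
  assumes cc: "coherent_config \<Omega> S" and "R \<noteq> {}" and R: "\<forall>r\<in>R. is_relation S r"
  shows "is_relation S (\<Inter>R)"
proof (rule is_relationI[OF cc])
  show "\<Inter>R \<subseteq> \<Omega> \<times> \<Omega>"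
    using \<open>R \<noteq> {}\<close> R is_relation_subset[OF cc] by blast
  fix z assume z: "z \<in> S" "z \<inter> \<Inter>R \<noteq> {}"
  show "z \<subseteq> \<Inter>R"
  proof (rule Inter_greatest)
    fix r assume "r \<in> R"
    with z show "z \<subseteq> r"
      using R is_relation_saturated[OF cc] by blast
  qed
qed

lemma is_relation_converse:
  assumes cc: "coherent_config \<Omega> S" and r: "is_relation S r"
  shows "is_relation S (converse r)"
proof (rule is_relationI[OF cc])
  show "converse r \<subseteq> \<Omega> \<times> \<Omega>" using is_relation_subset[OF cc r] by blast
  fix z assume z: "z \<in> S" "z \<inter> converse r \<noteq> {}"
  then obtain a b where "(b, a) \<in> converse z" "(b, a) \<in> r" by auto
  then have "converse z \<subseteq> r"
    using is_relation_saturated[OF cc r coherent_configD(6)[OF cc z(1)]] by blast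
  then show "z \<subseteq> converse r" by auto
qed

lemma is_relation_Id_on: "coherent_config \<Omega> S \<Longrightarrow> is_relation S (Id_on \<Omega>)"
  unfolding is_relation_def using coherent_configD(5) by blast

lemma is_relation_Times: "coherent_config \<Omega> S \<Longrightarrow> is_relation S (\<Omega> \<times> \<Omega>)"
  unfolding is_relation_def using coherent_configD(2) by blast

lemma is_relation_Id_on_fibers:
  assumes "union_of_fibers S \<Gamma>"
  shows "is_relation S (Id_on \<Gamma>)"
proof -
  obtain F where F: "\<forall>\<Delta>\<in>F. is_fiber S \<Delta>" "\<Gamma> = \<Union>F"
    using assms unfolding union_of_fibers_def by blast
  have "Id_on \<Gamma> = \<Union>(Id_on ` F)" using F(2) by auto
  moreover have "\<forall>r\<in>Id_on ` F. is_relation S r"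
    using F(1) is_relation_basis unfolding is_fiber_def by blast
  ultimately show ?thesis using is_relation_Union by metis
qed

lemma intersection_number_sum:
  assumes cc: "coherent_config \<Omega> S" and r: "is_relation S r" and s: "is_relation S s"
  shows "intersection_number r s p =
    (\<Sum>(a, b)\<in>{a\<in>S. a \<subseteq> r} \<times> {b\<in>S. b \<subseteq> s}. intersection_number a b p)"
proof -
  let ?I = "{a\<in>S. a \<subseteq> r} \<times> {b\<in>S. b \<subseteq> s}"
  let ?A = "\<lambda>(a, b). {c. (fst p, c) \<in> a \<and> (c, snd p) \<in> b}"
  have "{c. (fst p, c) \<in> r \<and> (c, snd p) \<in> s} \<subseteq> \<Union>(?A ` ?I)"
  proof
    fix c assume c: "c \<in> {c. (fst p, c) \<in> r \<and> (c, snd p) \<in> s}"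
    then have "(fst p, c) \<in> \<Union>S" "(c, snd p) \<in> \<Union>S"
      using is_relation_subset[OF cc r] is_relation_subset[OF cc s] coherent_configD(2)[OF cc]
      by auto
    then obtain a b where ab: "a \<in> S" "(fst p, c) \<in> a" "b \<in> S" "(c, snd p) \<in> b"
      by blast
    moreover have "a \<subseteq> r" "b \<subseteq> s"
      using ab c is_relation_saturated[OF cc r] is_relation_saturated[OF cc s] by blast+
    ultimately show "c \<in> \<Union>(?A ` ?I)" by blast
  qed
  then have decomp: "{c. (fst p, c) \<in> r \<and> (c, snd p) \<in> s} = \<Union>(?A ` ?I)" by auto
  have "card (\<Union>(?A ` ?I)) = (\<Sum>i\<in>?I. card (?A i))"
  proof (rule card_UN_disjoint)
    show "finite ?I" using finite_basis[OF cc] by simp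
    show "\<forall>i\<in>?I. finite (?A i)"
      using coherent_configD(1)[OF cc] by (auto intro: finite_subset[of _ \<Omega>] dest!: basis_subset[OF cc])
    show "\<forall>i\<in>?I. \<forall>j\<in>?I. i \<noteq> j \<longrightarrow> ?A i \<inter> ?A j = {}"
    proof (intro ballI impI)
      fix i j assume "i \<in> ?I" "j \<in> ?I" and ij: "i \<noteq> j"
      then obtain a b a' b' where ab: "i = (a, b)" "j = (a', b')" "a \<in> S" "b \<in> S" "a' \<in> S" "b' \<in> S"
        by auto
      show "?A i \<inter> ?A j = {}"
      proof (rule ccontr)
        assume "?A i \<inter> ?A j \<noteq> {}"
        then obtain c where "(fst p, c) \<in> a" "(c, snd p) \<in> b" "(fst p, c) \<in> a'" "(c, snd p) \<in> b'"
          unfolding ab by auto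
        then have "a = a'" "b = b'"
          using basis_eq[OF cc] ab(3-6) by blast+
        with ij ab(1,2) show False by simp
      qed
    qed
  qed
  then show ?thesis
    using decomp unfolding intersection_number_def by (simp add: case_prod_beta)
qed

lemma intersection_number_const:
  assumes cc: "coherent_config \<Omega> S" and "is_relation S r" "is_relation S s"
    and t: "t \<in> S" "p \<in> t" "q \<in> t"
  shows "intersection_number r s p = intersection_number r s q"
  unfolding intersection_number_sum[OF assms(1-3)]
  by (rule sum.cong) (use coherent_configD(7)[OF cc _ _ t] in auto)

lemma is_relation_intersection_number_level:
  assumes cc: "coherent_config \<Omega> S" and r: "is_relation S r" and s: "is_relation S s"
  shows "is_relation S {p\<in>\<Omega> \<times> \<Omega>. intersection_number r s p = k}"
proof (rule is_relationI[OF cc])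
  fix z assume "z \<in> S" "z \<inter> {p\<in>\<Omega> \<times> \<Omega>. intersection_number r s p = k} \<noteq> {}"
  then show "z \<subseteq> {p\<in>\<Omega> \<times> \<Omega>. intersection_number r s p = k}"
    using intersection_number_const[OF cc r s] basis_subset[OF cc] by blast
qed blast

lemma intersection_number_pos:
  assumes "coherent_config \<Omega> S" "r \<in> S" "(a, c) \<in> r" "(c, b) \<in> s"
  shows "intersection_number r s (a, b) > 0"
proof -
  have "finite {c. (a, c) \<in> r \<and> (c, b) \<in> s}"
    using basis_subset[OF assms(1,2)] coherent_configD(1)[OF assms(1)]
    by (auto intro: finite_subset[of _ \<Omega>])
  with assms(3,4) show ?thesis
    unfolding intersection_number_def by (auto simp: card_gt_0_iff)
qed

lemma intersection_number_posD:
  "intersection_number r s (a, b) > 0 \<Longrightarrow> \<exists>c. (a, c) \<in> r \<and> (c, b) \<in> s"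
  unfolding intersection_number_def by (metis (no_types, lifting) card.empty empty_Collect_eq fst_conv less_irrefl snd_conv)

lemma fission_antisym:
  assumes "is_fission \<Omega> S T" "is_fission \<Omega> T S"
  shows "S = T"
proof -
  have "S \<subseteq> T" if ccS: "coherent_config \<Omega> S" and ccT: "coherent_config \<Omega> T"
    and ST: "\<And>r. is_relation S r \<Longrightarrow> is_relation T r"
    and TS: "\<And>r. is_relation T r \<Longrightarrow> is_relation S r" for S T :: "('a \<times> 'a) set set"
  proof
    fix s assume s: "s \<in> S"
    then obtain p where p: "p \<in> s"
      using basis_nonempty[OF ccS] by blast
    then obtain t where t: "t \<in> T" "p \<in> t"
      using basis_subset[OF ccS s] coherent_configD(2)[OF ccT] by blast
    have "t \<subseteq> s"
      using is_relation_saturated[OF ccT ST[OF is_relation_basis[OF s]] t p] .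
    moreover have "s \<subseteq> t"
      using is_relation_saturated[OF ccS TS[OF is_relation_basis[OF t(1)]] s p t(2)] .
    ultimately show "s \<in> T" using t(1) by simp
  qed
  with assms show ?thesis
    unfolding is_fission_def by blast
qed

lemma is_Pi_fission_unique: "is_Pi_fission \<Omega> S \<Pi> T \<Longrightarrow> is_Pi_fission \<Omega> S \<Pi> T' \<Longrightarrow> T = T'"
  unfolding is_Pi_fission_def by (intro fission_antisym) blast+

definition discrete_cc :: "'a set \<Rightarrow> ('a \<times> 'a) set set" where
  "discrete_cc \<Omega> = (\<lambda>p. {p}) ` (\<Omega> \<times> \<Omega>)"

lemma coherent_config_discrete: "finite \<Omega> \<Longrightarrow> coherent_config \<Omega> (discrete_cc \<Omega>)"
  unfolding coherent_config_def discrete_cc_def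
proof (intro conjI)
  show "\<exists>T\<subseteq>(\<lambda>p. {p}) ` (\<Omega> \<times> \<Omega>). Id_on \<Omega> = \<Union>T"
    by (intro exI[of _ "(\<lambda>x. {(x, x)}) ` \<Omega>"]) auto
qed auto

lemma is_complete_discrete: "is_complete (discrete_cc \<Omega>)"
  unfolding is_complete_def discrete_cc_def by auto

lemma is_relation_discrete: "r \<subseteq> \<Omega> \<times> \<Omega> \<Longrightarrow> is_relation (discrete_cc \<Omega>) r"
  unfolding is_relation_def discrete_cc_def by (intro exI[of _ "(\<lambda>p. {p}) ` r"]) auto

lemma union_of_fibers_discrete: "\<Gamma> \<subseteq> \<Omega> \<Longrightarrow> union_of_fibers (discrete_cc \<Omega>) \<Gamma>"
  unfolding union_of_fibers_def is_fiber_def discrete_cc_def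
  by (intro exI[of _ "(\<lambda>x. {x}) ` \<Gamma>"]) auto

lemma is_relation_complete:
  assumes cc: "coherent_config \<Omega> S" and "is_complete S" and "r \<subseteq> \<Omega> \<times> \<Omega>"
  shows "is_relation S r"
  using assms by (intro is_relationI[OF cc]) (auto simp: is_complete_def)

lemma Id_on_fst_image:
  assumes "A \<subseteq> Id_on G"
  shows "Id_on (fst ` A) = A"
proof
  show "A \<subseteq> Id_on (fst ` A)"
    using assms by (force simp: Id_on_iff)
  show "Id_on (fst ` A) \<subseteq> A"
  proof
    fix q assume "q \<in> Id_on (fst ` A)"
    then obtain x y where "q = (x, x)" "(x, y) \<in> A" by force
    moreover then have "y = x" using assms by (auto simp: Id_on_iff)
    ultimately show "q \<in> A" by simp
  qed
qed

locale Pi_fission_construction =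
  fixes \<Omega> :: "'a set" and S :: "('a \<times> 'a) set set" and \<Pi> :: "'a set set"
  assumes cc: "coherent_config \<Omega> S" and sub: "\<Pi> \<subseteq> Pow \<Omega>"
begin

definition admissible :: "('a \<times> 'a) set set set" where
  "admissible = {T. is_fission \<Omega> S T \<and> (\<forall>\<Gamma>\<in>\<Pi>. union_of_fibers T \<Gamma>)}"

definition common_rel :: "('a \<times> 'a) set set" where
  "common_rel = {r. \<forall>T\<in>admissible. is_relation T r}"

definition atom :: "'a \<times> 'a \<Rightarrow> ('a \<times> 'a) set" where
  "atom p = \<Inter>{r\<in>common_rel. p \<in> r}"

definition atoms :: "('a \<times> 'a) set set" where
  "atoms = atom ` (\<Omega> \<times> \<Omega>)"

lemma admissible_coherent: "T \<in> admissible \<Longrightarrow> coherent_config \<Omega> T"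
  unfolding admissible_def is_fission_def by simp

lemma discrete_admissible: "discrete_cc \<Omega> \<in> admissible"
  unfolding admissible_def is_fission_def
proof (intro CollectI conjI allI impI ballI)
  show "coherent_config \<Omega> (discrete_cc \<Omega>)"
    using coherent_config_discrete coherent_configD(1)[OF cc] by blast
  fix r assume "is_relation S r"
  then show "is_relation (discrete_cc \<Omega>) r"
    using is_relation_discrete is_relation_subset[OF cc] by blast
next
  fix \<Gamma> assume "\<Gamma> \<in> \<Pi>"
  then show "union_of_fibers (discrete_cc \<Omega>) \<Gamma>" using union_of_fibers_discrete sub by blast
qed

lemma common_rel_subset: "r \<in> common_rel \<Longrightarrow> r \<subseteq> \<Omega> \<times> \<Omega>"
  unfolding common_rel_def
  using discrete_admissible is_relation_subset[OF admissible_coherent[OF discrete_admissible]] by blast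

lemma common_rel_Times: "\<Omega> \<times> \<Omega> \<in> common_rel"
  unfolding common_rel_def using is_relation_Times admissible_coherent by blast

lemma common_rel_Id_on: "Id_on \<Omega> \<in> common_rel"
  unfolding common_rel_def using is_relation_Id_on admissible_coherent by blast

lemma common_rel_Diff: "r1 \<in> common_rel \<Longrightarrow> r2 \<in> common_rel \<Longrightarrow> r1 - r2 \<in> common_rel"
  unfolding common_rel_def using is_relation_Diff admissible_coherent by blast

lemma common_rel_converse: "r \<in> common_rel \<Longrightarrow> converse r \<in> common_rel"
  unfolding common_rel_def using is_relation_converse admissible_coherent by blast

lemma common_rel_Inter:
  assumes "R \<noteq> {}" "R \<subseteq> common_rel"
  shows "\<Inter>R \<in> common_rel"
  unfolding common_rel_def
proof (intro CollectI ballI)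
  fix T assume T: "T \<in> admissible"
  have "\<forall>r\<in>R. is_relation T r" using assms(2) T unfolding common_rel_def by blast
  then show "is_relation T (\<Inter>R)"
    using is_relation_Inter[OF admissible_coherent[OF T] assms(1)] by blast
qed

lemma common_rel_level:
  "r \<in> common_rel \<Longrightarrow> s \<in> common_rel \<Longrightarrow> {p\<in>\<Omega> \<times> \<Omega>. intersection_number r s p = k} \<in> common_rel"
  unfolding common_rel_def using is_relation_intersection_number_level admissible_coherent by blast

lemma atom_common_rel:
  assumes "p \<in> \<Omega> \<times> \<Omega>"
  shows "atom p \<in> common_rel"
  unfolding atom_def
proof (rule common_rel_Inter)
  show "{r \<in> common_rel. p \<in> r} \<noteq> {}" using common_rel_Times assms by blast
qed blast

lemma atom_mem: "p \<in> \<Omega> \<times> \<Omega> \<Longrightarrow> p \<in> atom p"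
  unfolding atom_def by blast

lemma atom_least: "r \<in> common_rel \<Longrightarrow> p \<in> r \<Longrightarrow> atom p \<subseteq> r"
  unfolding atom_def by blast

lemma atom_eq:
  assumes p: "p \<in> \<Omega> \<times> \<Omega>" and q: "q \<in> atom p"
  shows "atom q = atom p"
proof -
  have qO: "q \<in> \<Omega> \<times> \<Omega>" using common_rel_subset[OF atom_common_rel[OF p]] q by blast
  have 1: "atom q \<subseteq> atom p" using atom_least[OF atom_common_rel[OF p] q] .
  have "p \<in> atom q"
  proof (rule ccontr)
    assume "p \<notin> atom q"
    then have "p \<in> atom p - atom q" using atom_mem[OF p] by blast
    moreover have "atom p - atom q \<in> common_rel" using common_rel_Diff atom_common_rel p qO by blast
    ultimately have "atom p \<subseteq> atom p - atom q" using atom_least by blast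
    then show False using q atom_mem[OF qO] by blast
  qed
  then have "atom p \<subseteq> atom q" using atom_least[OF atom_common_rel[OF qO]] by blast
  then show ?thesis using 1 by blast
qed

lemma atoms_common_rel: "w \<in> atoms \<Longrightarrow> w \<in> common_rel"
  unfolding atoms_def using atom_common_rel by blast

lemma atoms_eq:
  assumes "w1 \<in> atoms" "w2 \<in> atoms" "w1 \<inter> w2 \<noteq> {}"
  shows "w1 = w2"
proof -
  obtain p1 where p1: "p1 \<in> \<Omega> \<times> \<Omega>" "w1 = atom p1" using assms(1) unfolding atoms_def by blast
  obtain p2 where p2: "p2 \<in> \<Omega> \<times> \<Omega>" "w2 = atom p2" using assms(2) unfolding atoms_def by blast
  obtain q where q: "q \<in> atom p1" "q \<in> atom p2" using assms(3) p1 p2 by blast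
  have "atom q = atom p1" using atom_eq[OF p1(1) q(1)] .
  moreover have "atom q = atom p2" using atom_eq[OF p2(1) q(2)] .
  ultimately show ?thesis using p1 p2 by simp
qed

lemma is_relation_atoms:
  assumes "r \<in> common_rel"
  shows "is_relation atoms r"
  unfolding is_relation_def
proof (intro exI conjI)
  show "atom ` r \<subseteq> atoms" unfolding atoms_def using common_rel_subset[OF assms] by blast
  show "r = \<Union>(atom ` r)"
  proof
    show "r \<subseteq> \<Union>(atom ` r)" using atom_mem common_rel_subset[OF assms] by blast
    show "\<Union>(atom ` r) \<subseteq> r" using atom_least[OF assms] by blast
  qed
qed

lemma converse_atom:
  assumes ab: "(a, b) \<in> \<Omega> \<times> \<Omega>"
  shows "converse (atom (a, b)) = atom (b, a)"
proof
  have ba: "(b, a) \<in> \<Omega> \<times> \<Omega>" using ab by blast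
  have "atom (b, a) \<subseteq> converse (atom (a, b))"
    by (rule atom_least[OF common_rel_converse[OF atom_common_rel[OF ab]]]) (use atom_mem[OF ab] in auto)
  moreover have "atom (a, b) \<subseteq> converse (atom (b, a))"
    by (rule atom_least[OF common_rel_converse[OF atom_common_rel[OF ba]]]) (use atom_mem[OF ba] in auto)
  ultimately show "converse (atom (a, b)) \<subseteq> atom (b, a)" "atom (b, a) \<subseteq> converse (atom (a, b))"
    by auto
qed

lemma intersection_number_atoms_const:
  assumes r: "r \<in> atoms" and s: "s \<in> atoms" and t: "t \<in> atoms" and p: "p \<in> t" and q: "q \<in> t"
  shows "intersection_number r s p = intersection_number r s q"
proof -
  obtain u where u: "u \<in> \<Omega> \<times> \<Omega>" "t = atom u" using t unfolding atoms_def by blast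
  define K where "K = {x\<in>\<Omega> \<times> \<Omega>. intersection_number r s x = intersection_number r s p}"
  have K: "K \<in> common_rel"
    unfolding K_def by (rule common_rel_level[OF atoms_common_rel[OF r] atoms_common_rel[OF s]])
  have "p \<in> \<Omega> \<times> \<Omega>"
    using p unfolding u(2) by (rule subsetD[OF common_rel_subset[OF atom_common_rel[OF u(1)]]])
  then have "atom p \<subseteq> K"
    by (intro atom_least[OF K]) (simp add: K_def)
  moreover have "atom p = t" using atom_eq[OF u(1)] p u(2) by simp
  ultimately have "q \<in> K" using q by blast
  then show ?thesis by (simp add: K_def)
qed

lemma coherent_config_atoms: "coherent_config \<Omega> atoms"
  unfolding coherent_config_def
proof (intro conjI)
  show "finite \<Omega>" using coherent_configD(1)[OF cc] .
  show "\<Union>atoms = \<Omega> \<times> \<Omega>"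
  proof
    show "\<Union>atoms \<subseteq> \<Omega> \<times> \<Omega>" using atoms_common_rel common_rel_subset by blast
    show "\<Omega> \<times> \<Omega> \<subseteq> \<Union>atoms" unfolding atoms_def using atom_mem by blast
  qed
  show "{} \<notin> atoms" unfolding atoms_def using atom_mem by blast
  show "\<forall>s\<in>atoms. \<forall>t\<in>atoms. s \<noteq> t \<longrightarrow> s \<inter> t = {}" using atoms_eq by blast
  show "\<exists>T\<subseteq>atoms. Id_on \<Omega> = \<Union>T"
    using is_relation_atoms[OF common_rel_Id_on] unfolding is_relation_def .
  show "\<forall>s\<in>atoms. s\<inverse> \<in> atoms"
  proof
    fix s assume "s \<in> atoms"
    then obtain a b where ab: "(a, b) \<in> \<Omega> \<times> \<Omega>" "s = atom (a, b)" unfolding atoms_def by blast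
    then have "s\<inverse> = atom (b, a)" using converse_atom by simp
    moreover have "(b, a) \<in> \<Omega> \<times> \<Omega>" using ab(1) by blast
    ultimately show "s\<inverse> \<in> atoms" unfolding atoms_def by blast
  qed
  show "\<forall>r\<in>atoms. \<forall>s\<in>atoms. \<forall>t\<in>atoms. \<forall>x\<in>t. \<forall>y\<in>t.
      card {c. (fst x, c) \<in> r \<and> (c, snd x) \<in> s} = card {c. (fst y, c) \<in> r \<and> (c, snd y) \<in> s}"
    by (intro ballI) (rule intersection_number_atoms_const[unfolded intersection_number_def])
qed

lemma union_of_fibers_atoms:
  assumes "\<Gamma> \<in> \<Pi>"
  shows "union_of_fibers atoms \<Gamma>"
  unfolding union_of_fibers_def
proof (intro exI conjI)
  have \<Gamma>: "\<Gamma> \<subseteq> \<Omega>" using assms sub by blast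
  have Id: "Id_on \<Gamma> \<in> common_rel"
    using assms is_relation_Id_on_fibers unfolding common_rel_def admissible_def by blast
  show "\<forall>\<Delta>\<in>(\<lambda>p. fst ` atom p) ` Id_on \<Gamma>. is_fiber atoms \<Delta>"
  proof
    fix \<Delta> assume "\<Delta> \<in> (\<lambda>p. fst ` atom p) ` Id_on \<Gamma>"
    then obtain p where p: "p \<in> Id_on \<Gamma>" "\<Delta> = fst ` atom p" by blast
    have "atom p \<subseteq> Id_on \<Gamma>" using atom_least[OF Id p(1)] .
    then have "Id_on \<Delta> = atom p" unfolding p(2) by (rule Id_on_fst_image)
    moreover have "p \<in> \<Omega> \<times> \<Omega>" using p(1) \<Gamma> by blast
    ultimately show "is_fiber atoms \<Delta>"
      unfolding is_fiber_def atoms_def by simp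
  qed
  show "\<Gamma> = \<Union>((\<lambda>p. fst ` atom p) ` Id_on \<Gamma>)"
  proof
    show "\<Gamma> \<subseteq> \<Union>((\<lambda>p. fst ` atom p) ` Id_on \<Gamma>)"
    proof
      fix x assume x: "x \<in> \<Gamma>"
      then have "(x, x) \<in> atom (x, x)" using atom_mem \<Gamma> by blast
      then have "x \<in> fst ` atom (x, x)" by force
      then show "x \<in> \<Union>((\<lambda>p. fst ` atom p) ` Id_on \<Gamma>)" using x by blast
    qed
    show "\<Union>((\<lambda>p. fst ` atom p) ` Id_on \<Gamma>) \<subseteq> \<Gamma>"
    proof (rule UN_least)
      fix p assume "p \<in> Id_on \<Gamma>"
      then have "atom p \<subseteq> Id_on \<Gamma>" by (rule atom_least[OF Id])
      then show "fst ` atom p \<subseteq> \<Gamma>" by auto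
    qed
  qed
qed

lemma is_Pi_fission_atoms: "is_Pi_fission \<Omega> S \<Pi> atoms"
  unfolding is_Pi_fission_def
proof (intro conjI allI impI ballI)
  show "is_fission \<Omega> S atoms"
    unfolding is_fission_def
  proof (intro conjI allI impI)
    show "coherent_config \<Omega> atoms" by (rule coherent_config_atoms)
    fix r assume "is_relation S r"
    then have "r \<in> common_rel"
      unfolding common_rel_def admissible_def is_fission_def by blast
    then show "is_relation atoms r" by (rule is_relation_atoms)
  qed
next
  fix \<Gamma> assume "\<Gamma> \<in> \<Pi>"
  then show "union_of_fibers atoms \<Gamma>" by (rule union_of_fibers_atoms)
next
  fix T assume "is_fission \<Omega> S T \<and> (\<forall>\<Gamma>\<in>\<Pi>. union_of_fibers T \<Gamma>)"
  then have T: "T \<in> admissible" unfolding admissible_def by blast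
  show "is_fission \<Omega> atoms T"
    unfolding is_fission_def
  proof (intro conjI allI impI)
    show "coherent_config \<Omega> T" using admissible_coherent[OF T] .
    fix r assume "is_relation atoms r"
    then obtain U where U: "U \<subseteq> atoms" "r = \<Union>U"
      unfolding is_relation_def by blast
    have "\<forall>u\<in>U. is_relation T u"
      using U(1) atoms_common_rel T unfolding common_rel_def by blast
    then show "is_relation T r" unfolding U(2) by (rule is_relation_Union)
  qed
qed

end

lemma is_Pi_fission_Pi_fission:
  assumes "coherent_config \<Omega> S" "\<Pi> \<subseteq> Pow \<Omega>"
  shows "is_Pi_fission \<Omega> S \<Pi> (Pi_fission \<Omega> S \<Pi>)"
proof -
  interpret Pi_fission_construction \<Omega> S \<Pi> using assms by unfold_locales
  show ?thesis
    unfolding Pi_fission_def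
    by (rule theI[of _ atoms]) (use is_Pi_fission_atoms is_Pi_fission_unique in blast)+
qed

lemma fiber_exists:
  assumes cc: "coherent_config \<Omega> S" and x: "x \<in> \<Omega>"
  obtains \<Delta> where "Id_on \<Delta> \<in> S" "x \<in> \<Delta>"
proof -
  obtain T where T: "T \<subseteq> S" "Id_on \<Omega> = \<Union>T" using coherent_configD(5)[OF cc] by blast
  then obtain t where t: "t \<in> T" "(x, x) \<in> t" using x by blast
  have "Id_on (fst ` t) = t" using t(1) T(2) by (intro Id_on_fst_image) blast
  then have "Id_on (fst ` t) \<in> S" using t(1) T(1) by auto
  moreover have "x \<in> fst ` t" using t(2) by force
  ultimately show ?thesis by (rule that)
qed

lemma fiber_eq:
  assumes cc: "coherent_config \<Omega> S" and "Id_on \<Delta> \<in> S" "Id_on \<Delta>' \<in> S" "x \<in> \<Delta>" "x \<in> \<Delta>'"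
  shows "\<Delta> = \<Delta>'"
proof -
  have "Id_on \<Delta> = Id_on \<Delta>'"
    using basis_eq[OF cc assms(2,3), of "(x, x)"] assms(4,5) by blast
  then show ?thesis by (metis Domain_Id_on)
qed

lemma fiber_fst_closed:
  assumes cc: "coherent_config \<Omega> S" and t: "t \<in> S" "(x, y) \<in> t" "(x', y') \<in> t"
    and \<Delta>: "Id_on \<Delta> \<in> S" "x \<in> \<Delta>"
  shows "x' \<in> \<Delta>"
proof -
  have "intersection_number (Id_on \<Delta>) t (x, y) > 0"
    using intersection_number_pos[OF cc \<Delta>(1) _ t(2)] \<Delta>(2) by blast
  then have "intersection_number (Id_on \<Delta>) t (x', y') > 0"
    using coherent_configD(7)[OF cc \<Delta>(1) t(1) t] by simp
  from intersection_number_posD[OF this] obtain c where "(x', c) \<in> Id_on \<Delta>" by blast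
  then show ?thesis by blast
qed

lemma fiber_snd_closed:
  assumes cc: "coherent_config \<Omega> S" and t: "t \<in> S" "(x, y) \<in> t" "(x', y') \<in> t"
    and \<Delta>: "Id_on \<Delta> \<in> S" "y \<in> \<Delta>"
  shows "y' \<in> \<Delta>"
proof -
  have "intersection_number t (Id_on \<Delta>) (x, y) > 0"
    using intersection_number_pos[OF cc t(1,2)] \<Delta>(2) by blast
  then have "intersection_number t (Id_on \<Delta>) (x', y') > 0"
    using coherent_configD(7)[OF cc t(1) \<Delta>(1) t] by simp
  from intersection_number_posD[OF this] obtain c where "(c, y') \<in> Id_on \<Delta>" by blast
  then show ?thesis by blast
qed

text \<open>The intersection number of $p^*$ and $p$ at $(y, y)$ counts the predecessors of $y$ in $p$,
  which are all equal to $\alpha$.\<close>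
lemma singleton_fiber_successors:
  assumes cc: "coherent_config \<Omega> S" and \<alpha>: "Id_on {\<alpha>} \<in> S" and p: "p \<in> S" "(\<alpha>, y) \<in> p"
    and \<Phi>: "Id_on \<Phi> \<in> S" "y \<in> \<Phi>" "y' \<in> \<Phi>"
  shows "(\<alpha>, y') \<in> p"
proof -
  have p': "converse p \<in> S" using coherent_configD(6)[OF cc p(1)] .
  have "intersection_number (converse p) p (y, y) > 0"
    using intersection_number_pos[OF cc p', of y \<alpha>] p(2) by simp
  moreover have "intersection_number (converse p) p (y, y) = intersection_number (converse p) p (y', y')"
    using coherent_configD(7)[OF cc p' p(1) \<Phi>(1)] \<Phi>(2,3) by blast
  ultimately have "intersection_number (converse p) p (y', y') > 0" by simp
  from intersection_number_posD[OF this] obtain c where c: "(c, y') \<in> p" by blast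
  have "c \<in> {\<alpha>}" using fiber_fst_closed[OF cc p c \<alpha>] by simp
  then show ?thesis using c by simp
qed

lemma card_successors_fiber_const:
  assumes cc: "coherent_config \<Omega> S" and r: "r \<in> S" and \<Gamma>: "Id_on \<Gamma> \<in> S"
    and \<Delta>: "Id_on \<Delta> \<in> S" "x \<in> \<Delta>" "x' \<in> \<Delta>"
  shows "card {c\<in>\<Gamma>. (x, c) \<in> r} = card {c\<in>\<Gamma>. (x', c) \<in> r}"
proof (cases "\<exists>a b. (a, b) \<in> r \<and> b \<in> \<Gamma>")
  case True
  then obtain a b where ab: "(a, b) \<in> r" "b \<in> \<Gamma>" by blast
  have "v \<in> \<Gamma>" if "(u, v) \<in> r" for u v
    using fiber_snd_closed[OF cc r ab(1) that \<Gamma> ab(2)] .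
  then have eq: "{c\<in>\<Gamma>. (z, c) \<in> r} = {c. (z, c) \<in> r \<and> (c, z) \<in> converse r}" for z
    by blast
  have "intersection_number r (converse r) (x, x) = intersection_number r (converse r) (x', x')"
    using coherent_configD(7)[OF cc r coherent_configD(6)[OF cc r] \<Delta>(1)] \<Delta>(2,3) by blast
  then show ?thesis unfolding eq intersection_number_def by simp
next
  case False
  then have empty: "{c\<in>\<Gamma>. (z, c) \<in> r} = {}" for z by blast
  show ?thesis by (simp only: empty)
qed

locale one_point_extension =
  fixes \<Omega>' :: "'a set" and Y :: "('a \<times> 'a) set set" and \<alpha> :: 'a
  assumes ccY: "coherent_config \<Omega>' Y" and notin: "\<alpha> \<notin> \<Omega>'"
begin

definition Fib :: "'a set set" where
  "Fib = {\<Delta>. Id_on \<Delta> \<in> Y}"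

definition Ext :: "('a \<times> 'a) set set" where
  "Ext = Y \<union> {{(\<alpha>, \<alpha>)}} \<union> (\<lambda>\<Delta>. {\<alpha>} \<times> \<Delta>) ` Fib \<union> (\<lambda>\<Delta>. \<Delta> \<times> {\<alpha>}) ` Fib"

lemma Fib_subset: "\<Delta> \<in> Fib \<Longrightarrow> \<Delta> \<subseteq> \<Omega>'"
  unfolding Fib_def using basis_subset[OF ccY] by blast

lemma point_notin_Fib: "\<Delta> \<in> Fib \<Longrightarrow> \<alpha> \<notin> \<Delta>"
  using Fib_subset notin by blast

lemma Fib_nonempty: "\<Delta> \<in> Fib \<Longrightarrow> \<Delta> \<noteq> {}"
  unfolding Fib_def using coherent_configD(3)[OF ccY] by fastforce

lemma Fib_eq: "\<Delta> \<in> Fib \<Longrightarrow> \<Delta>' \<in> Fib \<Longrightarrow> x \<in> \<Delta> \<Longrightarrow> x \<in> \<Delta>' \<Longrightarrow> \<Delta> = \<Delta>'"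
  unfolding Fib_def using fiber_eq[OF ccY] by blast

lemma Fib_cover:
  assumes "x \<in> \<Omega>'"
  obtains \<Delta> where "\<Delta> \<in> Fib" "x \<in> \<Delta>"
  using fiber_exists[OF ccY assms] unfolding Fib_def by blast

lemma Ext_pairE:
  assumes "z \<in> Ext" "(a, b) \<in> z"
  obtains (old) "z \<in> Y" "a \<in> \<Omega>'" "b \<in> \<Omega>'"
    | (loop) "z = {(\<alpha>, \<alpha>)}" "a = \<alpha>" "b = \<alpha>"
    | (out) \<Delta> where "\<Delta> \<in> Fib" "z = {\<alpha>} \<times> \<Delta>" "a = \<alpha>" "b \<in> \<Delta>"
    | (into) \<Delta> where "\<Delta> \<in> Fib" "z = \<Delta> \<times> {\<alpha>}" "a \<in> \<Delta>" "b = \<alpha>"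
proof -
  consider "z \<in> Y" | "z = {(\<alpha>, \<alpha>)}" | "z \<in> (\<lambda>\<Delta>. {\<alpha>} \<times> \<Delta>) ` Fib" | "z \<in> (\<lambda>\<Delta>. \<Delta> \<times> {\<alpha>}) ` Fib"
    using assms(1) unfolding Ext_def by blast
  then show ?thesis
  proof cases
    case 1
    then have "(a, b) \<in> \<Omega>' \<times> \<Omega>'" using basis_subset[OF ccY] assms(2) by blast
    with 1 show ?thesis using old by blast
  next
    case 2
    then show ?thesis using loop assms(2) by blast
  next
    case 3
    then show ?thesis using out assms(2) by blast
  next
    case 4
    then show ?thesis using into assms(2) by blast
  qed
qed

lemma Ext_subset: "z \<in> Ext \<Longrightarrow> z \<subseteq> insert \<alpha> \<Omega>' \<times> insert \<alpha> \<Omega>'"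
proof
  fix p assume z: "z \<in> Ext" and "p \<in> z"
  then obtain a b where ab: "p = (a, b)" "(a, b) \<in> z" by (cases p) blast
  from z ab(2) show "p \<in> insert \<alpha> \<Omega>' \<times> insert \<alpha> \<Omega>'"
    by (cases rule: Ext_pairE) (use ab(1) Fib_subset in auto)
qed

lemma Ext_in_Y: "z \<in> Ext \<Longrightarrow> (a, b) \<in> z \<Longrightarrow> a \<in> \<Omega>' \<Longrightarrow> b \<in> \<Omega>' \<Longrightarrow> z \<in> Y"
  by (erule Ext_pairE) (use notin in auto)

lemma Ext_loop: "z \<in> Ext \<Longrightarrow> (\<alpha>, \<alpha>) \<in> z \<Longrightarrow> z = {(\<alpha>, \<alpha>)}"
  by (erule Ext_pairE) (use notin point_notin_Fib in auto)

lemma Ext_out: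
  "z \<in> Ext \<Longrightarrow> (\<alpha>, c) \<in> z \<Longrightarrow> c \<in> \<Omega>' \<Longrightarrow> \<exists>\<Delta>\<in>Fib. z = {\<alpha>} \<times> \<Delta> \<and> c \<in> \<Delta>"
  by (erule Ext_pairE) (use notin in auto)

lemma Ext_into:
  "z \<in> Ext \<Longrightarrow> (c, \<alpha>) \<in> z \<Longrightarrow> c \<in> \<Omega>' \<Longrightarrow> \<exists>\<Delta>\<in>Fib. z = \<Delta> \<times> {\<alpha>} \<and> c \<in> \<Delta>"
  by (erule Ext_pairE) (use notin in auto)

lemma Ext_eq:
  assumes z: "z \<in> Ext" "p \<in> z" and z': "z' \<in> Ext" "p \<in> z'"
  shows "z = z'"
proof -
  obtain a b where p: "p = (a, b)" by (cases p)
  have "a \<in> insert \<alpha> \<Omega>'" "b \<in> insert \<alpha> \<Omega>'"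
    using Ext_subset[OF z(1)] z(2) p by blast+
  then consider "a \<in> \<Omega>'" "b \<in> \<Omega>'" | "a = \<alpha>" "b = \<alpha>" | "a = \<alpha>" "b \<in> \<Omega>'" | "a \<in> \<Omega>'" "b = \<alpha>"
    by blast
  then show ?thesis
  proof cases
    case 1
    then have "z \<in> Y" "z' \<in> Y"
      using Ext_in_Y z z' p by blast+
    then show ?thesis using basis_eq[OF ccY] z(2) z'(2) by blast
  next
    case 2
    then show ?thesis using Ext_loop z z' p by blast
  next
    case 3
    then obtain \<Delta> \<Delta>' where "\<Delta> \<in> Fib" "z = {\<alpha>} \<times> \<Delta>" "b \<in> \<Delta>" "\<Delta>' \<in> Fib" "z' = {\<alpha>} \<times> \<Delta>'" "b \<in> \<Delta>'"
      using Ext_out[OF z(1)] Ext_out[OF z'(1)] z(2) z'(2) p by metis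
    then show ?thesis using Fib_eq by metis
  next
    case 4
    then obtain \<Delta> \<Delta>' where "\<Delta> \<in> Fib" "z = \<Delta> \<times> {\<alpha>}" "a \<in> \<Delta>" "\<Delta>' \<in> Fib" "z' = \<Delta>' \<times> {\<alpha>}" "a \<in> \<Delta>'"
      using Ext_into[OF z(1)] Ext_into[OF z'(1)] z(2) z'(2) p by metis
    then show ?thesis using Fib_eq by metis
  qed
qed

definition same_fiber :: "'a \<Rightarrow> 'a \<Rightarrow> bool" where
  "same_fiber x y \<longleftrightarrow> x = \<alpha> \<and> y = \<alpha> \<or> (\<exists>\<Delta>\<in>Fib. x \<in> \<Delta> \<and> y \<in> \<Delta>)"

lemma same_fiber_sym: "same_fiber x y \<Longrightarrow> same_fiber y x"
  unfolding same_fiber_def by blast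

lemma Ext_same_fiber:
  assumes t: "t \<in> Ext" "(a, b) \<in> t" "(a', b') \<in> t"
  shows "same_fiber a a' \<and> same_fiber b b'"
  using t(1,2)
proof (cases rule: Ext_pairE)
  case old
  obtain \<Delta> where \<Delta>: "\<Delta> \<in> Fib" "a \<in> \<Delta>" using Fib_cover old(2) .
  obtain \<Delta>' where \<Delta>': "\<Delta>' \<in> Fib" "b \<in> \<Delta>'" using Fib_cover old(3) .
  have "a' \<in> \<Delta>" using fiber_fst_closed[OF ccY old(1) t(2,3)] \<Delta> unfolding Fib_def by blast
  moreover have "b' \<in> \<Delta>'" using fiber_snd_closed[OF ccY old(1) t(2,3)] \<Delta>' unfolding Fib_def by blast
  ultimately show ?thesis
    unfolding same_fiber_def using \<Delta> \<Delta>' by blast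
qed (use t(3) in \<open>auto simp: same_fiber_def\<close>)

lemma Ext_to_point:
  assumes r: "r \<in> Ext" "(a, \<alpha>) \<in> r" and "same_fiber a a'"
  shows "(a', \<alpha>) \<in> r"
  using r
proof (cases rule: Ext_pairE)
  case (into \<Delta>)
  then obtain \<Delta>' where "\<Delta>' \<in> Fib" "a \<in> \<Delta>'" "a' \<in> \<Delta>'"
    using \<open>same_fiber a a'\<close> point_notin_Fib unfolding same_fiber_def by blast
  then show ?thesis using into Fib_eq by blast
qed (use \<open>same_fiber a a'\<close> point_notin_Fib notin in \<open>auto simp: same_fiber_def\<close>)

lemma Ext_from_point:
  assumes r: "r \<in> Ext" "(\<alpha>, b) \<in> r" and "same_fiber b b'"
  shows "(\<alpha>, b') \<in> r"
  using r
proof (cases rule: Ext_pairE)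
  case (out \<Delta>)
  then obtain \<Delta>' where "\<Delta>' \<in> Fib" "b \<in> \<Delta>'" "b' \<in> \<Delta>'"
    using \<open>same_fiber b b'\<close> point_notin_Fib unfolding same_fiber_def by blast
  then show ?thesis using out Fib_eq by blast
qed (use \<open>same_fiber b b'\<close> point_notin_Fib notin in \<open>auto simp: same_fiber_def\<close>)

lemma card_intermediates_split:
  assumes r: "r \<in> Ext"
  shows "card {c. (a, c) \<in> r \<and> (c, b) \<in> s} =
    card {c\<in>\<Omega>'. (a, c) \<in> r \<and> (c, b) \<in> s} + (if (a, \<alpha>) \<in> r \<and> (\<alpha>, b) \<in> s then 1 else 0)"
proof -
  let ?A = "{c\<in>\<Omega>'. (a, c) \<in> r \<and> (c, b) \<in> s}"
  let ?B = "if (a, \<alpha>) \<in> r \<and> (\<alpha>, b) \<in> s then {\<alpha>} else {}"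
  have "{c. (a, c) \<in> r \<and> (c, b) \<in> s} \<subseteq> insert \<alpha> \<Omega>'"
    using Ext_subset[OF r] by blast
  then have eq: "{c. (a, c) \<in> r \<and> (c, b) \<in> s} = ?A \<union> ?B" by auto
  have "card (?A \<union> ?B) = card ?A + card ?B"
    by (rule card_Un_disjoint) (use coherent_configD(1)[OF ccY] notin in auto)
  then show ?thesis unfolding eq by simp
qed

lemma point_intermediate_const:
  assumes r: "r \<in> Ext" and s: "s \<in> Ext" and t: "t \<in> Ext" "(a, b) \<in> t" "(a', b') \<in> t"
  shows "(a, \<alpha>) \<in> r \<and> (\<alpha>, b) \<in> s \<longleftrightarrow> (a', \<alpha>) \<in> r \<and> (\<alpha>, b') \<in> s"
proof -
  have aa': "same_fiber a a'" and bb': "same_fiber b b'"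
    using Ext_same_fiber[OF t] by simp_all
  show ?thesis
  proof
    assume "(a, \<alpha>) \<in> r \<and> (\<alpha>, b) \<in> s"
    then show "(a', \<alpha>) \<in> r \<and> (\<alpha>, b') \<in> s"
      using Ext_to_point[OF r _ aa'] Ext_from_point[OF s _ bb'] by simp
  next
    assume "(a', \<alpha>) \<in> r \<and> (\<alpha>, b') \<in> s"
    then show "(a, \<alpha>) \<in> r \<and> (\<alpha>, b) \<in> s"
      using Ext_to_point[OF r _ same_fiber_sym[OF aa']] Ext_from_point[OF s _ same_fiber_sym[OF bb']]
      by simp
  qed
qed

lemma card_off_point_in_Y:
  assumes r: "r \<in> Ext" and s: "s \<in> Ext" and t: "t \<in> Y" "(a, b) \<in> t" "(a', b') \<in> t"
  shows "card {c\<in>\<Omega>'. (a, c) \<in> r \<and> (c, b) \<in> s} = card {c\<in>\<Omega>'. (a', c) \<in> r \<and> (c, b') \<in> s}"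
proof (cases "r \<in> Y \<and> s \<in> Y")
  case True
  then have "{c\<in>\<Omega>'. (x, c) \<in> r \<and> (c, y) \<in> s} = {c. (x, c) \<in> r \<and> (c, y) \<in> s}" for x y
    using basis_subset[OF ccY] by blast
  moreover have "intersection_number r s (a, b) = intersection_number r s (a', b')"
    using True by (intro coherent_configD(7)[OF ccY _ _ t]) simp_all
  ultimately show ?thesis unfolding intersection_number_def by simp
next
  case False
  have empty: "{c\<in>\<Omega>'. (x, c) \<in> r \<and> (c, y) \<in> s} = {}" if "x \<in> \<Omega>'" "y \<in> \<Omega>'" for x y
  proof (rule ccontr)
    assume "{c\<in>\<Omega>'. (x, c) \<in> r \<and> (c, y) \<in> s} \<noteq> {}"
    then obtain c where c: "c \<in> \<Omega>'" "(x, c) \<in> r" "(c, y) \<in> s" by blast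
    have "r \<in> Y" using Ext_in_Y[OF r c(2) that(1) c(1)] .
    moreover have "s \<in> Y" using Ext_in_Y[OF s c(3) c(1) that(2)] .
    ultimately show False using False by blast
  qed
  have "a \<in> \<Omega>'" "b \<in> \<Omega>'" "a' \<in> \<Omega>'" "b' \<in> \<Omega>'"
    using basis_subset[OF ccY t(1)] t(2,3) by blast+
  then show ?thesis by (simp only: empty)
qed

text \<open>Only the relations $\{\alpha\} \times \Gamma$ leave $\alpha$ towards $\Omega'$, so the count is
  the number of $s^*$-successors of $b$ in the fiber $\Gamma$.\<close>
lemma card_off_point_from_point:
  assumes r: "r \<in> Ext" and s: "s \<in> Ext" and \<Delta>: "\<Delta> \<in> Fib" "b \<in> \<Delta>" "b' \<in> \<Delta>"
  shows "card {c\<in>\<Omega>'. (\<alpha>, c) \<in> r \<and> (c, b) \<in> s} = card {c\<in>\<Omega>'. (\<alpha>, c) \<in> r \<and> (c, b') \<in> s}"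
proof (cases "(\<exists>\<Gamma>\<in>Fib. r = {\<alpha>} \<times> \<Gamma>) \<and> s \<in> Y")
  case True
  then obtain \<Gamma> where \<Gamma>: "\<Gamma> \<in> Fib" "r = {\<alpha>} \<times> \<Gamma>" and "s \<in> Y" by blast
  have "{c\<in>\<Omega>'. (\<alpha>, c) \<in> r \<and> (c, y) \<in> s} = {c\<in>\<Gamma>. (y, c) \<in> converse s}" for y
    using Fib_subset[OF \<Gamma>(1)] \<Gamma>(2) by blast
  moreover have "card {c\<in>\<Gamma>. (b, c) \<in> converse s} = card {c\<in>\<Gamma>. (b', c) \<in> converse s}"
    using \<Gamma>(1) \<Delta>(1) unfolding Fib_def
    by (intro card_successors_fiber_const[OF ccY coherent_configD(6)[OF ccY \<open>s \<in> Y\<close>] _ _ \<Delta>(2,3)])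
      simp_all
  ultimately show ?thesis by simp
next
  case False
  have empty: "{c\<in>\<Omega>'. (\<alpha>, c) \<in> r \<and> (c, y) \<in> s} = {}" if "y \<in> \<Omega>'" for y
  proof (rule ccontr)
    assume "{c\<in>\<Omega>'. (\<alpha>, c) \<in> r \<and> (c, y) \<in> s} \<noteq> {}"
    then obtain c where c: "c \<in> \<Omega>'" "(\<alpha>, c) \<in> r" "(c, y) \<in> s" by blast
    have "\<exists>\<Gamma>\<in>Fib. r = {\<alpha>} \<times> \<Gamma>" using Ext_out[OF r c(2,1)] by blast
    moreover have "s \<in> Y" using Ext_in_Y[OF s c(3) c(1) that] .
    ultimately show False using False by blast
  qed
  have "b \<in> \<Omega>'" "b' \<in> \<Omega>'" using Fib_subset[OF \<Delta>(1)] \<Delta>(2,3) by blast+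
  then show ?thesis by (simp only: empty)
qed

lemma card_off_point_to_point:
  assumes r: "r \<in> Ext" and s: "s \<in> Ext" and \<Delta>: "\<Delta> \<in> Fib" "a \<in> \<Delta>" "a' \<in> \<Delta>"
  shows "card {c\<in>\<Omega>'. (a, c) \<in> r \<and> (c, \<alpha>) \<in> s} = card {c\<in>\<Omega>'. (a', c) \<in> r \<and> (c, \<alpha>) \<in> s}"
proof (cases "(\<exists>\<Gamma>\<in>Fib. s = \<Gamma> \<times> {\<alpha>}) \<and> r \<in> Y")
  case True
  then obtain \<Gamma> where \<Gamma>: "\<Gamma> \<in> Fib" "s = \<Gamma> \<times> {\<alpha>}" and "r \<in> Y" by blast
  have "{c\<in>\<Omega>'. (x, c) \<in> r \<and> (c, \<alpha>) \<in> s} = {c\<in>\<Gamma>. (x, c) \<in> r}" for x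
    using Fib_subset[OF \<Gamma>(1)] \<Gamma>(2) by blast
  moreover have "card {c\<in>\<Gamma>. (a, c) \<in> r} = card {c\<in>\<Gamma>. (a', c) \<in> r}"
    using \<Gamma>(1) \<Delta>(1) unfolding Fib_def
    by (intro card_successors_fiber_const[OF ccY \<open>r \<in> Y\<close> _ _ \<Delta>(2,3)]) simp_all
  ultimately show ?thesis by simp
next
  case False
  have empty: "{c\<in>\<Omega>'. (x, c) \<in> r \<and> (c, \<alpha>) \<in> s} = {}" if "x \<in> \<Omega>'" for x
  proof (rule ccontr)
    assume "{c\<in>\<Omega>'. (x, c) \<in> r \<and> (c, \<alpha>) \<in> s} \<noteq> {}"
    then obtain c where c: "c \<in> \<Omega>'" "(x, c) \<in> r" "(c, \<alpha>) \<in> s" by blast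
    have "\<exists>\<Gamma>\<in>Fib. s = \<Gamma> \<times> {\<alpha>}" using Ext_into[OF s c(3,1)] by blast
    moreover have "r \<in> Y" using Ext_in_Y[OF r c(2) that c(1)] .
    ultimately show False using False by blast
  qed
  have "a \<in> \<Omega>'" "a' \<in> \<Omega>'" using Fib_subset[OF \<Delta>(1)] \<Delta>(2,3) by blast+
  then show ?thesis by (simp only: empty)
qed

lemma intersection_number_Ext_const:
  assumes r: "r \<in> Ext" and s: "s \<in> Ext" and t: "t \<in> Ext" "p \<in> t" "q \<in> t"
  shows "intersection_number r s p = intersection_number r s q"
proof -
  obtain a b a' b' where p: "p = (a, b)" and q: "q = (a', b')" by (cases p, cases q)
  have ab: "(a, b) \<in> t" "(a', b') \<in> t" using t p q by simp_all
  have "card {c\<in>\<Omega>'. (a, c) \<in> r \<and> (c, b) \<in> s} = card {c\<in>\<Omega>'. (a', c) \<in> r \<and> (c, b') \<in> s}"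
    using t(1) ab(1)
  proof (cases rule: Ext_pairE)
    case old
    show ?thesis by (rule card_off_point_in_Y[OF r s old(1) ab])
  next
    case loop
    moreover have "a' = \<alpha>" "b' = \<alpha>" using loop(1) ab(2) by auto
    ultimately show ?thesis by simp
  next
    case (out \<Delta>)
    have "a' = \<alpha>" "b' \<in> \<Delta>" using out(2) ab(2) by auto
    then show ?thesis unfolding out(3) using card_off_point_from_point[OF r s out(1) out(4)] by simp
  next
    case (into \<Delta>)
    have "a' \<in> \<Delta>" "b' = \<alpha>" using into(2) ab(2) by auto
    then show ?thesis unfolding into(4) using card_off_point_to_point[OF r s into(1) into(3)] by simp
  qed
  then show ?thesis
    unfolding p q intersection_number_def fst_conv snd_conv card_intermediates_split[OF r]
      point_intermediate_const[OF r s t(1) ab] by simp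
qed

lemma Union_Ext: "\<Union>Ext = insert \<alpha> \<Omega>' \<times> insert \<alpha> \<Omega>'"
proof
  show "\<Union>Ext \<subseteq> insert \<alpha> \<Omega>' \<times> insert \<alpha> \<Omega>'" using Ext_subset by blast
  show "insert \<alpha> \<Omega>' \<times> insert \<alpha> \<Omega>' \<subseteq> \<Union>Ext"
  proof
    fix p assume "p \<in> insert \<alpha> \<Omega>' \<times> insert \<alpha> \<Omega>'"
    then obtain a b where p: "p = (a, b)" and "a = \<alpha> \<or> a \<in> \<Omega>'" "b = \<alpha> \<or> b \<in> \<Omega>'" by blast
    then consider "a \<in> \<Omega>'" "b \<in> \<Omega>'" | "a = \<alpha>" "b = \<alpha>" | "a = \<alpha>" "b \<in> \<Omega>'" | "a \<in> \<Omega>'" "b = \<alpha>"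
      by blast
    then show "p \<in> \<Union>Ext"
    proof cases
      case 1
      then show ?thesis using p coherent_configD(2)[OF ccY] unfolding Ext_def by blast
    next
      case 2
      then show ?thesis using p unfolding Ext_def by blast
    next
      case 3
      then obtain \<Delta> where "\<Delta> \<in> Fib" "b \<in> \<Delta>" using Fib_cover by blast
      then show ?thesis using 3 p unfolding Ext_def by blast
    next
      case 4
      then obtain \<Delta> where "\<Delta> \<in> Fib" "a \<in> \<Delta>" using Fib_cover by blast
      then show ?thesis using 4 p unfolding Ext_def by blast
    qed
  qed
qed

lemma converse_Ext: "z \<in> Ext \<Longrightarrow> converse z \<in> Ext"
  unfolding Ext_def using coherent_configD(6)[OF ccY] by auto

lemma coherent_config_Ext: "coherent_config (insert \<alpha> \<Omega>') Ext"
  unfolding coherent_config_def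
proof (intro conjI)
  show "finite (insert \<alpha> \<Omega>')" using coherent_configD(1)[OF ccY] by simp
  show "\<Union>Ext = insert \<alpha> \<Omega>' \<times> insert \<alpha> \<Omega>'" by (rule Union_Ext)
  show "{} \<notin> Ext"
    unfolding Ext_def using coherent_configD(3)[OF ccY] Fib_nonempty by auto
  show "\<forall>s\<in>Ext. \<forall>t\<in>Ext. s \<noteq> t \<longrightarrow> s \<inter> t = {}"
    using Ext_eq by blast
  obtain T where T: "T \<subseteq> Y" "Id_on \<Omega>' = \<Union>T" using coherent_configD(5)[OF ccY] by blast
  have "insert {(\<alpha>, \<alpha>)} T \<subseteq> Ext" using T(1) unfolding Ext_def by blast
  moreover have "Id_on (insert \<alpha> \<Omega>') = \<Union>(insert {(\<alpha>, \<alpha>)} T)"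
    using T(2) by (auto simp: Id_on_def)
  ultimately show "\<exists>T\<subseteq>Ext. Id_on (insert \<alpha> \<Omega>') = \<Union>T" by blast
  show "\<forall>s\<in>Ext. s\<inverse> \<in> Ext" using converse_Ext by blast
  show "\<forall>r\<in>Ext. \<forall>s\<in>Ext. \<forall>t\<in>Ext. \<forall>x\<in>t. \<forall>y\<in>t.
      card {c. (fst x, c) \<in> r \<and> (c, snd x) \<in> s} = card {c. (fst y, c) \<in> r \<and> (c, snd y) \<in> s}"
    by (intro ballI) (rule intersection_number_Ext_const[unfolded intersection_number_def])
qed

end

lemma is_complete_fission:
  assumes ccT: "coherent_config \<Omega> T" and T: "is_complete T" and U: "is_fission \<Omega> T U"
  shows "is_complete U"
  unfolding is_complete_def
proof
  fix u assume u: "u \<in> U"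
  have ccU: "coherent_config \<Omega> U" using U unfolding is_fission_def by blast
  obtain p where p: "p \<in> u" using basis_nonempty[OF ccU u] by blast
  then obtain t where t: "t \<in> T" "p \<in> t"
    using basis_subset[OF ccU u] coherent_configD(2)[OF ccT] by blast
  obtain p' where "t = {p'}" using T t(1) unfolding is_complete_def by blast
  then have "t = {p}" using t(2) by simp
  then have "is_relation U {p}"
    using U is_relation_basis[OF t(1)] unfolding is_fission_def by simp
  from is_relation_saturated[OF ccU this u p] have "u \<subseteq> {p}" by simp
  then show "\<exists>q. u = {q}" using p by blast
qed

lemma singleton_fiber:
  assumes "union_of_fibers S {\<alpha>}"
  shows "Id_on {\<alpha>} \<in> S"
proof -
  obtain F where F: "\<forall>\<Delta>\<in>F. is_fiber S \<Delta>" "{\<alpha>} = \<Union>F"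
    using assms unfolding union_of_fibers_def by blast
  then obtain \<Delta> where \<Delta>: "\<Delta> \<in> F" "\<alpha> \<in> \<Delta>" by blast
  then have "\<Delta> \<subseteq> {\<alpha>}" using F(2) by blast
  with \<Delta>(2) have "\<Delta> = {\<alpha>}" by blast
  then show ?thesis using F(1) \<Delta>(1) unfolding is_fiber_def by blast
qed

lemma is_Pi_fission_coherent: "is_Pi_fission \<Omega> S \<Pi> T \<Longrightarrow> coherent_config \<Omega> T"
  by (simp add: is_Pi_fission_def is_fission_def)

lemma is_Pi_fission_least:
  "is_Pi_fission \<Omega> S \<Pi> T \<Longrightarrow> is_fission \<Omega> S U \<Longrightarrow> \<forall>\<Gamma>\<in>\<Pi>. union_of_fibers U \<Gamma> \<Longrightarrow> is_fission \<Omega> T U"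
  unfolding is_Pi_fission_def by blast

lemma is_Pi_fission_point_ext:
  "coherent_config \<Omega> S \<Longrightarrow> \<alpha> \<in> \<Omega> \<Longrightarrow> is_Pi_fission \<Omega> S {{\<alpha>}} (point_ext \<Omega> S \<alpha>)"
  unfolding point_ext_def by (rule is_Pi_fission_Pi_fission) auto

locale point_restriction =
  fixes \<Omega> :: "'a set" and S :: "('a \<times> 'a) set set" and \<alpha> :: 'a and Y :: "('a \<times> 'a) set set"
  assumes cc: "coherent_config \<Omega> S" and point: "\<alpha> \<in> \<Omega>"
    and fission: "is_fission (\<Omega> - {\<alpha>}) (restrict_cc (point_ext \<Omega> S \<alpha>) (\<Omega> - {\<alpha>})) Y"
begin

lemma fission_point_ext: "is_fission \<Omega> S (point_ext \<Omega> S \<alpha>)"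
  using is_Pi_fission_point_ext[OF cc point] unfolding is_Pi_fission_def by (rule conjunct1)

lemma coherent_config_point_ext: "coherent_config \<Omega> (point_ext \<Omega> S \<alpha>)"
  using fission_point_ext unfolding is_fission_def by (rule conjunct1)

lemma is_relation_point_ext: "is_relation S r \<Longrightarrow> is_relation (point_ext \<Omega> S \<alpha>) r"
  using fission_point_ext unfolding is_fission_def by blast

lemma point_ext_fiber: "Id_on {\<alpha>} \<in> point_ext \<Omega> S \<alpha>"
proof (rule singleton_fiber)
  show "union_of_fibers (point_ext \<Omega> S \<alpha>) {\<alpha>}"
    using is_Pi_fission_point_ext[OF cc point] unfolding is_Pi_fission_def by blast
qed

sublocale one_point_extension "\<Omega> - {\<alpha>}" Y \<alpha>
  using fission unfolding is_fission_def by unfold_locales auto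

lemma coherent_config_Ext_Omega: "coherent_config \<Omega> Ext"
  using coherent_config_Ext insert_Diff[OF point] by simp

lemma is_relation_restricted_basis:
  assumes "q \<in> point_ext \<Omega> S \<alpha>"
  shows "is_relation Y (q \<inter> (\<Omega> - {\<alpha>}) \<times> (\<Omega> - {\<alpha>}))"
proof (cases "q \<inter> (\<Omega> - {\<alpha>}) \<times> (\<Omega> - {\<alpha>}) = {}")
  case True
  then show ?thesis unfolding is_relation_def by (intro exI[of _ "{}"]) simp
next
  case False
  then have "q \<inter> (\<Omega> - {\<alpha>}) \<times> (\<Omega> - {\<alpha>}) \<in> restrict_cc (point_ext \<Omega> S \<alpha>) (\<Omega> - {\<alpha>})"
    using assms unfolding restrict_cc_def by blast
  then show ?thesis
    using fission is_relation_basis unfolding is_fission_def by blast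
qed

lemma Fib_subset_point_ext_fiber:
  assumes \<Delta>: "\<Delta> \<in> Fib" "y \<in> \<Delta>"
  obtains \<Phi> where "Id_on \<Phi> \<in> point_ext \<Omega> S \<alpha>" "\<Delta> \<subseteq> \<Phi>"
proof -
  have y: "y \<in> \<Omega> - {\<alpha>}" using Fib_subset[OF \<Delta>(1)] \<Delta>(2) by blast
  then obtain \<Phi> where \<Phi>: "Id_on \<Phi> \<in> point_ext \<Omega> S \<alpha>" "y \<in> \<Phi>"
    using fiber_exists[OF coherent_config_point_ext] by blast
  have "\<alpha> \<notin> \<Phi>"
  proof
    assume "\<alpha> \<in> \<Phi>"
    then have "{\<alpha>} = \<Phi>"
      using fiber_eq[OF coherent_config_point_ext point_ext_fiber \<Phi>(1)] by blast
    with y \<Phi>(2) show False by blast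
  qed
  then have "Id_on \<Phi> \<inter> (\<Omega> - {\<alpha>}) \<times> (\<Omega> - {\<alpha>}) = Id_on \<Phi>"
    using basis_subset[OF coherent_config_point_ext \<Phi>(1)] by blast
  then have "is_relation Y (Id_on \<Phi>)"
    using is_relation_restricted_basis[OF \<Phi>(1)] by simp
  moreover have "Id_on \<Delta> \<in> Y" using \<Delta>(1) unfolding Fib_def by blast
  ultimately have "Id_on \<Delta> \<subseteq> Id_on \<Phi>"
    using is_relation_saturated[OF ccY, of "Id_on \<Phi>" "Id_on \<Delta>" "(y, y)"] \<Delta>(2) \<Phi>(2) by blast
  then have "\<Delta> \<subseteq> \<Phi>" by blast
  with \<Phi>(1) show ?thesis by (rule that)
qed

lemma point_ext_from_point:
  assumes q: "q \<in> point_ext \<Omega> S \<alpha>" "(\<alpha>, y) \<in> q" and \<Delta>: "\<Delta> \<in> Fib" "y \<in> \<Delta>" "y' \<in> \<Delta>"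
  shows "(\<alpha>, y') \<in> q"
proof -
  obtain \<Phi> where \<Phi>: "Id_on \<Phi> \<in> point_ext \<Omega> S \<alpha>" "\<Delta> \<subseteq> \<Phi>"
    using Fib_subset_point_ext_fiber[OF \<Delta>(1,2)] .
  show ?thesis
    using singleton_fiber_successors[OF coherent_config_point_ext point_ext_fiber q \<Phi>(1)] \<Phi>(2) \<Delta>(2,3)
    by blast
qed

lemma is_relation_Ext_point_ext:
  assumes q: "q \<in> point_ext \<Omega> S \<alpha>"
  shows "is_relation Ext q"
proof (rule is_relationI[OF coherent_config_Ext_Omega])
  show "q \<subseteq> \<Omega> \<times> \<Omega>" using basis_subset[OF coherent_config_point_ext q] .
  fix z assume z: "z \<in> Ext" "z \<inter> q \<noteq> {}"
  then obtain a b where ab: "(a, b) \<in> z" "(a, b) \<in> q" by auto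
  from z(1) ab(1) show "z \<subseteq> q"
  proof (cases rule: Ext_pairE)
    case old
    then have "z \<subseteq> q \<inter> (\<Omega> - {\<alpha>}) \<times> (\<Omega> - {\<alpha>})"
      using is_relation_saturated[OF ccY is_relation_restricted_basis[OF q] old(1) ab(1)] ab(2) by blast
    then show ?thesis by blast
  next
    case loop
    then show ?thesis using ab(2) by simp
  next
    case (out \<Delta>)
    have "(\<alpha>, y) \<in> q" if "y \<in> \<Delta>" for y
      using point_ext_from_point[OF q _ out(1) out(4) that] ab(2) out(3) by simp
    then show ?thesis using out(2) by blast
  next
    case (into \<Delta>)
    have q': "converse q \<in> point_ext \<Omega> S \<alpha>"
      using coherent_configD(6)[OF coherent_config_point_ext q] .
    have "(\<alpha>, a) \<in> converse q" using ab(2) into(4) by simp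
    then have "(\<alpha>, y) \<in> converse q" if "y \<in> \<Delta>" for y
      using point_ext_from_point[OF q' _ into(1) into(3) that] by blast
    then show ?thesis using into(2) by blast
  qed
qed

lemma fission_Ext: "is_fission \<Omega> S Ext"
  unfolding is_fission_def
proof (intro conjI allI impI)
  show "coherent_config \<Omega> Ext" by (rule coherent_config_Ext_Omega)
  fix r assume "is_relation S r"
  then have "is_relation (point_ext \<Omega> S \<alpha>) r" by (rule is_relation_point_ext)
  then obtain T where T: "T \<subseteq> point_ext \<Omega> S \<alpha>" "r = \<Union>T"
    unfolding is_relation_def by blast
  then have "\<forall>t\<in>T. is_relation Ext t" by (blast intro: is_relation_Ext_point_ext)
  then show "is_relation Ext r" unfolding T(2) by (rule is_relation_Union)
qed

lemma union_of_fibers_Ext: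
  assumes "union_of_fibers Y (\<Gamma> - {\<alpha>})"
  shows "union_of_fibers Ext \<Gamma>"
proof -
  obtain F where F: "\<forall>\<Delta>\<in>F. is_fiber Y \<Delta>" "\<Gamma> - {\<alpha>} = \<Union>F"
    using assms unfolding union_of_fibers_def by blast
  let ?F = "if \<alpha> \<in> \<Gamma> then insert {\<alpha>} F else F"
  have "Id_on {\<alpha>} = {(\<alpha>, \<alpha>)}" by auto
  then have "is_fiber Ext {\<alpha>}" unfolding is_fiber_def Ext_def by simp
  then have "\<forall>\<Delta>\<in>?F. is_fiber Ext \<Delta>"
    using F(1) unfolding is_fiber_def Ext_def by auto
  moreover have "\<Gamma> = \<Union>?F" using F(2) by auto
  ultimately show ?thesis unfolding union_of_fibers_def by blast
qed

end

lemma restricted_fission_complete: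
  assumes cc: "coherent_config \<Omega> S" and \<Pi>: "\<Pi> \<subseteq> Pow \<Omega>" and base: "generalized_base \<Omega> S \<Pi>"
    and \<alpha>: "\<alpha> \<in> \<Omega>"
    and Y: "is_fission (\<Omega> - {\<alpha>}) (restrict_cc (point_ext \<Omega> S \<alpha>) (\<Omega> - {\<alpha>})) Y"
    and fibers: "\<forall>\<Gamma>\<in>\<Pi>. union_of_fibers Y (\<Gamma> - {\<alpha>})"
  shows "is_complete Y"
proof -
  interpret point_restriction \<Omega> S \<alpha> Y using cc \<alpha> Y by unfold_locales
  have Pi: "is_Pi_fission \<Omega> S \<Pi> (Pi_fission \<Omega> S \<Pi>)"
    using is_Pi_fission_Pi_fission[OF cc \<Pi>] .
  have "\<forall>\<Gamma>\<in>\<Pi>. union_of_fibers Ext \<Gamma>" using fibers by (blast intro: union_of_fibers_Ext)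
  then have "is_fission \<Omega> (Pi_fission \<Omega> S \<Pi>) Ext"
    by (rule is_Pi_fission_least[OF Pi fission_Ext])
  then have "is_complete Ext"
    using is_complete_fission[OF is_Pi_fission_coherent[OF Pi]] base
    unfolding generalized_base_def by blast
  moreover have "Y \<subseteq> Ext" unfolding Ext_def by blast
  ultimately show ?thesis unfolding is_complete_def by blast
qed

text \<open>No coherence of $S$ is needed: if every admissible fission is complete, the discrete
  configuration is the $\Pi$-fission.\<close>
lemma generalized_baseI:
  assumes fin: "finite \<Omega>" and S: "\<Union>S \<subseteq> \<Omega> \<times> \<Omega>" and \<Pi>: "\<Pi> \<subseteq> Pow \<Omega>"
    and complete: "\<And>T. is_fission \<Omega> S T \<Longrightarrow> \<forall>\<Gamma>\<in>\<Pi>. union_of_fibers T \<Gamma> \<Longrightarrow> is_complete T"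
  shows "generalized_base \<Omega> S \<Pi>"
proof -
  have cc: "coherent_config \<Omega> (discrete_cc \<Omega>)" using coherent_config_discrete[OF fin] .
  have discrete: "is_Pi_fission \<Omega> S \<Pi> (discrete_cc \<Omega>)"
    unfolding is_Pi_fission_def
  proof (intro conjI allI impI ballI)
    have "is_relation (discrete_cc \<Omega>) r" if "is_relation S r" for r
    proof (rule is_relation_discrete)
      show "r \<subseteq> \<Omega> \<times> \<Omega>" using that S unfolding is_relation_def by blast
    qed
    then show "is_fission \<Omega> S (discrete_cc \<Omega>)"
      unfolding is_fission_def using cc by blast
  next
    fix \<Gamma> assume "\<Gamma> \<in> \<Pi>"
    then show "union_of_fibers (discrete_cc \<Omega>) \<Gamma>"
      using \<Pi> union_of_fibers_discrete by blast
  next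
    fix T assume T: "is_fission \<Omega> S T \<and> (\<forall>\<Gamma>\<in>\<Pi>. union_of_fibers T \<Gamma>)"
    then have ccT: "coherent_config \<Omega> T" and "is_complete T"
      using complete unfolding is_fission_def by auto
    then have "is_relation T r" if "is_relation (discrete_cc \<Omega>) r" for r
      by (rule is_relation_complete[OF _ _ is_relation_subset[OF cc that]])
    then show "is_fission \<Omega> (discrete_cc \<Omega>) T"
      unfolding is_fission_def using ccT by blast
  qed
  then have "Pi_fission \<Omega> S \<Pi> = discrete_cc \<Omega>"
    unfolding Pi_fission_def by (rule the_equality) (rule is_Pi_fission_unique[OF _ discrete])
  then show ?thesis
    unfolding generalized_base_def using is_complete_discrete by simp
qed

theorem lemma3p1:
  fixes \<Omega> :: "'a set" and S :: "('a \<times> 'a) set set" and \<Pi> :: "'a set set" and \<alpha> :: 'a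
  assumes "coherent_config \<Omega> S"
    and "\<Pi> \<subseteq> Pow \<Omega>"
    and "generalized_base \<Omega> S \<Pi>"
    and "\<alpha> \<in> \<Omega>"
  shows "generalized_base (\<Omega> - {\<alpha>}) (restrict_cc (point_ext \<Omega> S \<alpha>) (\<Omega> - {\<alpha>}))
           ((\<lambda>\<Gamma>. \<Gamma> - {\<alpha>}) ` \<Pi>)"
proof (rule generalized_baseI)
  show "finite (\<Omega> - {\<alpha>})" using coherent_configD(1)[OF assms(1)] by simp
  show "\<Union>(restrict_cc (point_ext \<Omega> S \<alpha>) (\<Omega> - {\<alpha>})) \<subseteq> (\<Omega> - {\<alpha>}) \<times> (\<Omega> - {\<alpha>})"
    unfolding restrict_cc_def by blast
  show "(\<lambda>\<Gamma>. \<Gamma> - {\<alpha>}) ` \<Pi> \<subseteq> Pow (\<Omega> - {\<alpha>})" using assms(2) by blast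
  fix Y
  assume "is_fission (\<Omega> - {\<alpha>}) (restrict_cc (point_ext \<Omega> S \<alpha>) (\<Omega> - {\<alpha>})) Y"
    and "\<forall>\<Gamma>\<in>(\<lambda>\<Gamma>. \<Gamma> - {\<alpha>}) ` \<Pi>. union_of_fibers Y \<Gamma>"
  then show "is_complete Y"
    by (intro restricted_fission_complete[OF assms]) auto
qed

end
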